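(* Let $R$ be a ring with identity and $a\in R$. Then $a$ is quasipolar if and only if $a=s+q$ where $s$ is strongly regular, $s\in\mathrm{comm}^2(a)$, $q\in R^{qnil}$, and $sq=qs=0$.
   Context: For $a\in R$, $\mathrm{comm}(a)=\{x\in R\mid xa=ax\}$, $\mathrm{comm}^2(a)=\{x\in R\mid xy=yx\text{ for all }y\in\mathrm{comm}(a)\}$. $U(R)$ is the unit group and $R^{qnil}=\{a\in R\mid 1+ax\in U(R)\text{ for every }x\in\mathrm{comm}(a)\}$. An element $a\in R$ is quasipolar if there is an idempotent $p\in\mathrm{comm}^2(a)$ with $a+p\in U(R)$ and $ap\in R^{qnil}$. An element $s$ is strongly regular if $s=sbs$ for some $b\in R$ with $bs=sb$. *)

theory Defs
  imports Main
begin

definition unit_el :: "'a::ring_1 \<Rightarrow> bool" where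
  "unit_el u \<longleftrightarrow> (\<exists>v. u * v = 1 \<and> v * u = 1)"

definition comm :: "'a::ring_1 \<Rightarrow> 'a set" where
  "comm a = {x. x * a = a * x}"

definition comm2 :: "'a::ring_1 \<Rightarrow> 'a set" where
  "comm2 a = {x. \<forall>y \<in> comm a. x * y = y * x}"

definition qnil :: "'a::ring_1 set" where
  "qnil = {a. \<forall>x \<in> comm a. unit_el (1 + a * x)}"

definition quasipolar :: "'a::ring_1 \<Rightarrow> bool" where
  "quasipolar a \<longleftrightarrow> (\<exists>p. p * p = p \<and> p \<in> comm2 a \<and> unit_el (a + p) \<and> a * p \<in> qnil)"

definition strongly_regular :: "'a::ring_1 \<Rightarrow> bool" where
  "strongly_regular s \<longleftrightarrow> (\<exists>b. s = s * b * s \<and> b * s = s * b)"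

end

theory Submission imports Defs begin

text \<open>
  If \<open>p\<close> is the quasipolar idempotent of \<open>a\<close>, then \<open>s = a(1 - p) = (a + p)(1 - p)\<close> is a unit times
  a commuting idempotent, hence strongly regular, and \<open>q = ap\<close> is the quasinilpotent part.
  Conversely, if \<open>s\<close> has group inverse \<open>c\<close>, then \<open>p = 1 - sc\<close> works: \<open>a + p = (1 + q)(s + 1 - sc)\<close>
  is a product of units, and \<open>sc\<close> lies in the double commutant of \<open>s\<close>, hence in that of \<open>a\<close>.
\<close>

lemma unit_el_mult:
  fixes u w :: "'a::ring_1"
  assumes "unit_el u" and "unit_el w"
  shows "unit_el (u * w)"
proof -
  obtain u' w' where "u * u' = 1" "u' * u = 1" "w * w' = 1" "w' * w = 1"
    using assms unfolding unit_el_def by blast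
  then have "(u * w) * (w' * u') = 1" "(w' * u') * (u * w) = 1"
    by (metis mult.assoc mult_1_left)+
  then show ?thesis unfolding unit_el_def by blast
qed

lemma inverse_commute_if_commute:
  fixes u v x :: "'a::ring_1"
  assumes uv: "u * v = 1" and vu: "v * u = 1" and xu: "x * u = u * x"
  shows "x * v = v * x"
proof -
  have "x * v = v * u * x * v" using vu by simp
  also have "\<dots> = v * (x * u) * v" using xu by (simp add: mult.assoc)
  also have "\<dots> = v * x" using uv by (simp add: mult.assoc)
  finally show ?thesis .
qed

lemma qnil_imp_unit_el_one_plus:
  fixes q :: "'a::ring_1"
  assumes "q \<in> qnil"
  shows "unit_el (1 + q)"
proof -
  have "1 \<in> comm q" by (simp add: comm_def)
  with assms have "unit_el (1 + q * 1)" unfolding qnil_def by blast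
  then show ?thesis by simp
qed

lemma comm2_commute: "x \<in> comm2 a \<Longrightarrow> y \<in> comm a \<Longrightarrow> x * y = y * x"
  unfolding comm2_def by blast

lemma comm2_commute_self: "x \<in> comm2 a \<Longrightarrow> x * a = a * x"
  by (simp add: comm2_commute comm_def)

lemma self_mem_comm2: "a \<in> comm2 a"
  unfolding comm2_def comm_def by auto

lemma one_mem_comm2: "1 \<in> comm2 a"
  unfolding comm2_def by simp

lemma comm2_diff: "x \<in> comm2 a \<Longrightarrow> y \<in> comm2 a \<Longrightarrow> x - y \<in> comm2 a"
  unfolding comm2_def by (simp add: algebra_simps)

lemma comm2_mult: "x \<in> comm2 a \<Longrightarrow> y \<in> comm2 a \<Longrightarrow> x * y \<in> comm2 a"
  unfolding comm2_def by (simp add: mult.assoc) (metis mult.assoc)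

lemma comm2_subset_comm2:
  assumes "s \<in> comm2 a"
  shows "comm2 s \<subseteq> comm2 a"
proof -
  have "comm a \<subseteq> comm s" using assms unfolding comm2_def comm_def by auto
  then show ?thesis unfolding comm2_def by blast
qed

lemma unit_mult_idempotent_strongly_regular:
  fixes u v f :: "'a::ring_1"
  assumes uv: "u * v = 1" and vu: "v * u = 1" and ff: "f * f = f" and fu: "f * u = u * f"
  shows "strongly_regular (u * f)"
proof -
  have fv: "f * v = v * f" using inverse_commute_if_commute[OF uv vu fu] .
  have right: "(u * f) * (v * f) = f"
    by (metis fv ff uv mult.assoc mult_1_left)
  have left: "(v * f) * (u * f) = f"
    by (metis fu ff vu mult.assoc mult_1_left)
  have "(u * f) * (v * f) * (u * f) = f * (u * f)" using right by simp
  also have "\<dots> = u * f" using fu ff by (metis mult.assoc)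
  finally have "(u * f) * (v * f) * (u * f) = u * f" .
  then show ?thesis
    unfolding strongly_regular_def using left right by metis
qed

lemma strongly_regular_group_inverse:
  fixes s :: "'a::ring_1"
  assumes "strongly_regular s"
  obtains c where "s * c = c * s" and "s * c * s = s" and "c * s * c = c"
proof -
  obtain b where sbs: "s = s * b * s" and bs: "b * s = s * b"
    using assms unfolding strongly_regular_def by blast
  show ?thesis
  proof
    show "s * (b * s * b) = (b * s * b) * s" by (metis bs mult.assoc sbs)
    show "s * (b * s * b) * s = s" by (metis bs mult.assoc sbs)
    show "(b * s * b) * s * (b * s * b) = b * s * b" by (metis mult.assoc sbs)
  qed
qed

lemma group_inverse_unit_el:
  fixes s c :: "'a::ring_1"
  assumes sc: "s * c = c * s" and scs: "s * c * s = s" and csc: "c * s * c = c"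
  shows "unit_el (s + (1 - s * c))"
proof -
  have "s * (s * c) = s" "(s * c) * c = c" "(s * c) * (s * c) = s * c"
    by (metis sc scs mult.assoc, metis csc sc, metis scs mult.assoc)
  then have "(s + (1 - s * c)) * (c + (1 - s * c)) = 1"
    "(c + (1 - s * c)) * (s + (1 - s * c)) = 1"
    using sc scs csc by (simp_all add: algebra_simps)
  then show ?thesis unfolding unit_el_def by blast
qed

lemma group_inverse_idempotent_mem_comm2:
  fixes s c :: "'a::ring_1"
  assumes sc: "s * c = c * s" and scs: "s * c * s = s"
  shows "s * c \<in> comm2 s"
  unfolding comm2_def
proof (intro CollectI ballI)
  fix y assume "y \<in> comm s"
  then have ys: "y * s = s * y" by (simp add: comm_def)
  define e where "e = s * c"
  have "s * e = s" unfolding e_def by (metis sc scs mult.assoc)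
  have "e * y * (1 - e) = c * y * (s * (1 - e))"
    unfolding e_def by (metis sc ys mult.assoc)
  also have "s * (1 - e) = 0" using \<open>s * e = s\<close> by (simp add: right_diff_distrib)
  finally have right: "e * y * e = e * y"
    by (metis eq_iff_diff_eq_0 mult.right_neutral mult_zero_right right_diff_distrib)
  have "(1 - e) * y * e = ((1 - e) * s) * y * c"
    unfolding e_def by (metis ys mult.assoc)
  also have "(1 - e) * s = 0"
    unfolding e_def using scs by (simp add: left_diff_distrib)
  finally have left: "e * y * e = y * e"
    by (metis eq_iff_diff_eq_0 mult_1_left mult_zero_left left_diff_distrib)
  show "s * c * y = y * (s * c)" using left right unfolding e_def by simp
qed

lemma quasipolar_imp_decomposition:
  fixes a p :: "'a::ring_1"
  assumes pp: "p * p = p" and p: "p \<in> comm2 a" and unit: "unit_el (a + p)"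
    and qnil: "a * p \<in> qnil"
  shows "\<exists>s q. a = s + q \<and> strongly_regular s \<and> s \<in> comm2 a \<and> q \<in> qnil
       \<and> s * q = 0 \<and> q * s = 0"
proof (intro exI conjI)
  have pa: "p * a = a * p" using comm2_commute_self[OF p] .
  show "a = a * (1 - p) + a * p" by (simp add: algebra_simps)
  show "a * (1 - p) \<in> comm2 a"
    by (intro comm2_mult comm2_diff self_mem_comm2 one_mem_comm2 p)
  show "a * p \<in> qnil" using qnil .
  have pa': "(1 - p) * a = a * (1 - p)" using pa by (simp add: algebra_simps)
  have "(1 - p) * p = 0" "p * (1 - p) = 0" using pp by (simp_all add: algebra_simps)
  moreover have "a * (1 - p) * (a * p) = a * a * ((1 - p) * p)"
    "a * p * (a * (1 - p)) = a * a * (p * (1 - p))"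
    by (metis pa' mult.assoc, metis pa mult.assoc)
  ultimately show "a * (1 - p) * (a * p) = 0" "a * p * (a * (1 - p)) = 0" by simp_all
  obtain v where uv: "(a + p) * v = 1" and vu: "v * (a + p) = 1"
    using unit unfolding unit_el_def by blast
  have "(1 - p) * (1 - p) = 1 - p" "(1 - p) * (a + p) = (a + p) * (1 - p)"
    using pp pa by (simp_all add: algebra_simps)
  then have "strongly_regular ((a + p) * (1 - p))"
    using unit_mult_idempotent_strongly_regular[OF uv vu] by blast
  moreover have "(a + p) * (1 - p) = a * (1 - p)" using pp by (simp add: algebra_simps)
  ultimately show "strongly_regular (a * (1 - p))" by simp
qed

lemma decomposition_imp_quasipolar:
  fixes a s q :: "'a::ring_1"
  assumes a: "a = s + q" and s_reg: "strongly_regular s" and s: "s \<in> comm2 a"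
    and q: "q \<in> qnil" and sq: "s * q = 0" and qs: "q * s = 0"
  shows "quasipolar a"
proof -
  obtain c where sc: "s * c = c * s" and scs: "s * c * s = s" and csc: "c * s * c = c"
    using strongly_regular_group_inverse[OF s_reg] by blast
  define p where "p = 1 - s * c"
  have "s * (s * c) = s" "q * (s * c) = 0" "s * c * (s * c) = s * c"
    by (metis sc scs mult.assoc, metis qs mult.assoc mult_zero_left, metis scs mult.assoc)
  then have sp: "s * p = 0" and qp: "q * p = q" and "p * p = p"
    unfolding p_def by (simp_all add: right_diff_distrib left_diff_distrib)
  moreover have "p \<in> comm2 a"
    unfolding p_def using group_inverse_idempotent_mem_comm2[OF sc scs]
      comm2_subset_comm2[OF s] by (blast intro: comm2_diff one_mem_comm2)
  moreover have "a * p = q" using a sp qp by (simp add: algebra_simps)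
  moreover have "a + p = (1 + q) * (s + p)"
    using a qs qp by (simp add: algebra_simps)
  then have "unit_el (a + p)"
    using unit_el_mult[OF qnil_imp_unit_el_one_plus[OF q] group_inverse_unit_el[OF sc scs csc]]
    unfolding p_def by simp
  ultimately show ?thesis unfolding quasipolar_def using q by auto
qed

theorem corollary2p17:
  fixes a :: "'a::ring_1"
  shows "quasipolar a \<longleftrightarrow>
    (\<exists>s q. a = s + q \<and> strongly_regular s \<and> s \<in> comm2 a \<and> q \<in> qnil
       \<and> s * q = 0 \<and> q * s = 0)"
  using quasipolar_imp_decomposition decomposition_imp_quasipolar
  unfolding quasipolar_def by blast

end
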